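(* Assume $b_1<n^*$ and $b_2<m^*$. (i) For every minimal set cover $S'\subseteq\mathcal V$, $$\max_{\sigma^1\in\Delta(\mathcal A_1):\ \text{node basis of }\sigma^1\subseteq S'}\ \min_{T\in\mathcal A_2}\bigl(-U_2(\sigma^1,T)\bigr)=b_2\Bigl(\frac{b_1}{|S'|}-1\Bigr),$$ and the maximum is attained by $\sigma^1(S',b_1)$. (ii) For every set packing $T'\subseteq\mathcal E$ with $|T'|\ge b_2$, $$\max_{\sigma^2\in\Delta(\mathcal A_2):\ \text{component basis of }\sigma^2\subseteq T'}\ \min_{S\in\mathcal A_1}U_2(S,\sigma^2)=\max\Bigl\{0,\ b_2\Bigl(1-\frac{b_1}{|T'|}\Bigr)\Bigr\},$$ and the maximum is attained by $\sigma^2(T',b_2)$.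
   Context: Detection model: finite nonempty sets $\mathcal V$ (nodes), $\mathcal E$ (components), monitoring sets $\mathcal C_i\subseteq\mathcal E$ for $i\in\mathcal V$ with every $e\in\mathcal E$ in some $\mathcal C_i$; $\mathcal C_S=\bigcup_{i\in S}\mathcal C_i$; $F(S,T)=|\mathcal C_S\cap T|$. A set cover is $S\subseteq\mathcal V$ with $\mathcal C_S=\mathcal E$; it is minimal if no proper subset is a set cover; $n^*$ is the minimum size of a set cover. A set packing is $T\subseteq\mathcal E$ with $|\mathcal C_i\cap T|\le1$ for all $i$; $m^*$ is the maximum size of a set packing. Game $\Gamma(b_1,b_2)$ for positive integers $b_1,b_2$: $\mathcal A_1=\{S\subseteq\mathcal V:|S|\le b_1\}$, $\mathcal A_2=\{T\subseteq\mathcal E:|T|\le b_2\}$, mixed strategies $\sigma^1\in\Delta(\mathcal A_1)$, $\sigma^2\in\Delta(\mathcal A_2)$ drawn independently; $U_1(\sigma^1,\sigma^2)=\mathbb E[F(S,T)]$, $U_2(\sigma^1,\sigma^2)=\mathbb E[|T|]-\mathbb E[F(S,T)]$ with $S\sim\sigma^1$, $T\sim\sigma^2$; pure actions are identified with point masses. Node basis of $\sigma^1$: $\{i:\mathbb P_{\sigma^1}(i\in S)>0\}$; component basis of $\sigma^2$: $\{e:\mathbb P_{\sigma^2}(e\in T)>0\}$. Cyclic strategies: for $S=\{i_1,\dots,i_n\}$ (fixed enumeration) with $n\ge b_1$, $S^k=\{i_k,\dots,i_{k+b_1-1}\}$ with indices cyclic mod $n$, $k=1,\dots,n$, and $\sigma^1(S,b_1)$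 puts probability $1/n$ on each $S^k$; analogously for $T=\{e_1,\dots,e_m\}$ with $m\ge b_2$, $T^l=\{e_l,\dots,e_{l+b_2-1}\}$ cyclically and $\sigma^2(T,b_2)$ puts probability $1/m$ on each $T^l$. *)

theory Defs
  imports "HOL-Probability.Probability"
begin

text \<open>Detection model: nodes V, components E, monitoring sets C i.\<close>

definition model :: "'v set \<Rightarrow> 'e set \<Rightarrow> ('v \<Rightarrow> 'e set) \<Rightarrow> bool" where
  "model V E C \<longleftrightarrow> finite V \<and> finite E \<and> V \<noteq> {} \<and> E \<noteq> {}
     \<and> (\<forall>i\<in>V. C i \<subseteq> E) \<and> (\<forall>e\<in>E. \<exists>i\<in>V. e \<in> C i)"

definition CS :: "('v \<Rightarrow> 'e set) \<Rightarrow> 'v set \<Rightarrow> 'e set" where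
  "CS C S = (\<Union>i\<in>S. C i)"

definition FF :: "('v \<Rightarrow> 'e set) \<Rightarrow> 'v set \<Rightarrow> 'e set \<Rightarrow> nat" where
  "FF C S T = card (CS C S \<inter> T)"

definition set_cover :: "'v set \<Rightarrow> 'e set \<Rightarrow> ('v \<Rightarrow> 'e set) \<Rightarrow> 'v set \<Rightarrow> bool" where
  "set_cover V E C S \<longleftrightarrow> S \<subseteq> V \<and> CS C S = E"

definition minimal_set_cover :: "'v set \<Rightarrow> 'e set \<Rightarrow> ('v \<Rightarrow> 'e set) \<Rightarrow> 'v set \<Rightarrow> bool" where
  "minimal_set_cover V E C S \<longleftrightarrow> set_cover V E C S \<and> (\<forall>S'. S' \<subset> S \<longrightarrow> \<not> set_cover V E C S')"

definition n_star :: "'v set \<Rightarrow> 'e set \<Rightarrow> ('v \<Rightarrow> 'e set) \<Rightarrow> nat" where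
  "n_star V E C = Min (card ` {S. set_cover V E C S})"

definition set_packing :: "'v set \<Rightarrow> 'e set \<Rightarrow> ('v \<Rightarrow> 'e set) \<Rightarrow> 'e set \<Rightarrow> bool" where
  "set_packing V E C T \<longleftrightarrow> T \<subseteq> E \<and> (\<forall>i\<in>V. card (C i \<inter> T) \<le> 1)"

definition m_star :: "'v set \<Rightarrow> 'e set \<Rightarrow> ('v \<Rightarrow> 'e set) \<Rightarrow> nat" where
  "m_star V E C = Max (card ` {T. set_packing V E C T})"

definition A1 :: "'v set \<Rightarrow> nat \<Rightarrow> 'v set set" where
  "A1 V b1 = {S. S \<subseteq> V \<and> card S \<le> b1}"

definition A2 :: "'e set \<Rightarrow> nat \<Rightarrow> 'e set set" where
  "A2 E b2 = {T. T \<subseteq> E \<and> card T \<le> b2}"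

definition mixed :: "'a set set \<Rightarrow> 'a set pmf \<Rightarrow> bool" where
  "mixed A \<sigma> \<longleftrightarrow> set_pmf \<sigma> \<subseteq> A"

definition U1 :: "('v \<Rightarrow> 'e set) \<Rightarrow> 'v set pmf \<Rightarrow> 'e set pmf \<Rightarrow> real" where
  "U1 C \<sigma>1 \<sigma>2 = measure_pmf.expectation (pair_pmf \<sigma>1 \<sigma>2) (\<lambda>(S,T). real (FF C S T))"

definition U2 :: "('v \<Rightarrow> 'e set) \<Rightarrow> 'v set pmf \<Rightarrow> 'e set pmf \<Rightarrow> real" where
  "U2 C \<sigma>1 \<sigma>2 = measure_pmf.expectation \<sigma>2 (\<lambda>T. real (card T))
                 - measure_pmf.expectation (pair_pmf \<sigma>1 \<sigma>2) (\<lambda>(S,T). real (FF C S T))"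

definition basis :: "'a set pmf \<Rightarrow> 'a set" where
  "basis \<sigma> = {x. measure_pmf.prob \<sigma> {S. x \<in> S} > 0}"

definition cyclic :: "'a list \<Rightarrow> nat \<Rightarrow> 'a set pmf" where
  "cyclic xs b = map_pmf (\<lambda>k. {xs ! ((k + j) mod length xs) | j. j < b})
                         (pmf_of_set {0..<length xs})"

end

theory Submission imports Defs begin

text \<open>
  (i) A node strategy supported on a minimal cover \<open>S'\<close> inspects each node \<open>i\<close> of \<open>S'\<close> with
  probability \<open>q i\<close>, where \<open>\<Sum>q \<le> b\<^sub>1\<close>. Every node of \<open>S'\<close> owns a private component monitored by
  no other node of \<open>S'\<close>; attacking the private components of the \<open>b\<^sub>2\<close> nodes with the smallest
  \<open>q\<close> gets detected with expected count at most \<open>b\<^sub>2 b\<^sub>1 / |S'|\<close>. Conversely, under the cyclic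
  strategy every node of \<open>S'\<close> is inspected with probability exactly \<open>b\<^sub>1 / |S'|\<close>, and every
  component is monitored by some node of \<open>S'\<close>.

  (ii) Dually, every node monitors at most one component of a packing \<open>T'\<close>, so \<open>b\<^sub>1\<close> nodes
  detect at most \<open>b\<^sub>1\<close> of its components; against a strategy supported on \<open>T'\<close> the
  defender covers the \<open>b\<^sub>1\<close> most frequently attacked ones (or all of \<open>T'\<close> if \<open>|T'| \<le> b\<^sub>1\<close>),
  and against the cyclic strategy each component is attacked with probability \<open>b\<^sub>2 / |T'|\<close>.

  Both averaging arguments rest on the fact that every element of a list of length \<open>n\<close> lies in
  exactly \<open>b\<close> of the \<open>n\<close> cyclic windows of length \<open>b\<close>.
\<close>

lemma expectation_finite_support:
  fixes f :: "'a \<Rightarrow> real"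
  assumes "finite (set_pmf p)"
  shows "measure_pmf.expectation p f = (\<Sum>a\<in>set_pmf p. pmf p a * f a)"
  using integral_measure_pmf[OF assms, of p f] by auto

lemma expectation_cong_finite_support:
  fixes f g :: "'a \<Rightarrow> real"
  assumes "finite (set_pmf p)" "\<And>a. a \<in> set_pmf p \<Longrightarrow> f a = g a"
  shows "measure_pmf.expectation p f = measure_pmf.expectation p g"
  unfolding expectation_finite_support[OF assms(1)] using assms(2) by simp

lemma expectation_mono_finite_support:
  fixes f g :: "'a \<Rightarrow> real"
  assumes "finite (set_pmf p)" "\<And>a. a \<in> set_pmf p \<Longrightarrow> f a \<le> g a"
  shows "measure_pmf.expectation p f \<le> measure_pmf.expectation p g"
  unfolding expectation_finite_support[OF assms(1)]
  by (intro sum_mono mult_left_mono) (auto simp: assms(2))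

lemma expectation_le_const_finite_support:
  fixes f :: "'a \<Rightarrow> real"
  assumes "finite (set_pmf p)" "\<And>a. a \<in> set_pmf p \<Longrightarrow> f a \<le> c"
  shows "measure_pmf.expectation p f \<le> c"
proof -
  have "measure_pmf.expectation p f \<le> measure_pmf.expectation p (\<lambda>_. c)"
    using assms by (rule expectation_mono_finite_support)
  then show ?thesis by simp
qed

lemma real_card_Int_eq_sum_indicator:
  assumes "finite A"
  shows "real (card (A \<inter> B)) = (\<Sum>e\<in>A. if e \<in> B then 1 else 0)"
  using assms by (simp add: sum.If_cases Int_def)

lemma expectation_card_Int:
  assumes "finite (set_pmf p)" "finite A"
  shows "measure_pmf.expectation p (\<lambda>S. real (card (A \<inter> g S)))
       = (\<Sum>e\<in>A. measure_pmf.expectation p (\<lambda>S. if e \<in> g S then 1 else 0))"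
  unfolding expectation_finite_support[OF assms(1)] real_card_Int_eq_sum_indicator[OF assms(2)]
  by (simp add: sum_distrib_left sum.swap[of _ A])

lemma mem_basis_if_mem_set_pmf:
  assumes "S \<in> set_pmf p" "x \<in> S"
  shows "x \<in> basis p"
proof -
  have "pmf p S \<le> measure_pmf.prob p {S. x \<in> S}"
    unfolding measure_pmf_single[symmetric] using assms(2)
    by (intro measure_pmf.finite_measure_mono) auto
  moreover have "pmf p S > 0" using assms(1) by (simp add: pmf_positive)
  ultimately show ?thesis unfolding basis_def by auto
qed

lemma neg_U2_return_pmf:
  "- U2 C \<sigma> (return_pmf T) = measure_pmf.expectation \<sigma> (\<lambda>S. real (FF C S T)) - real (card T)"
  unfolding U2_def pair_return_pmf2 by simp

lemma U2_return_pmf: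
  "U2 C (return_pmf S) \<sigma> = measure_pmf.expectation \<sigma> (\<lambda>T. real (card T))
                           - measure_pmf.expectation \<sigma> (\<lambda>T. real (FF C S T))"
  unfolding U2_def pair_return_pmf1 by simp

subsection \<open>Cyclic windows\<close>

definition cyclic_window :: "'a list \<Rightarrow> nat \<Rightarrow> nat \<Rightarrow> 'a set" where
  "cyclic_window xs b k = (\<lambda>j. xs ! ((k + j) mod length xs)) ` {..<b}"

lemma cyclic_eq_map_pmf_cyclic_window:
  "cyclic xs b = map_pmf (cyclic_window xs b) (pmf_of_set {0..<length xs})"
  unfolding cyclic_def cyclic_window_def by (rule arg_cong2[where f=map_pmf]) auto

lemma expectation_cyclic:
  fixes f :: "'a set \<Rightarrow> real"
  assumes "length xs > 0"
  shows "measure_pmf.expectation (cyclic xs b) f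
       = (\<Sum>k<length xs. f (cyclic_window xs b k)) / length xs"
  unfolding cyclic_eq_map_pmf_cyclic_window using assms
  by (simp add: atLeast0LessThan, subst integral_pmf_of_set, auto)

lemma set_pmf_cyclic:
  assumes "length xs > 0"
  shows "set_pmf (cyclic xs b) = cyclic_window xs b ` {0..<length xs}"
  unfolding cyclic_eq_map_pmf_cyclic_window using assms by (simp add: set_pmf_of_set)

lemma cyclic_window_subset:
  assumes "length xs > 0"
  shows "cyclic_window xs b k \<subseteq> set xs"
  unfolding cyclic_window_def using assms by auto

lemma add_mod_right_cancel_less:
  fixes x y j n :: nat
  assumes "x < n" "y < n" "(x + j) mod n = (y + j) mod n"
  shows "x = y"
proof (cases "x \<le> y")
  case True
  then obtain s where "y = x + n * s" using mod_eq_nat2E[OF assms(3)] by auto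
  then show ?thesis using assms(2) by (cases s) auto
next
  case False
  then obtain s where "x = y + n * s" using mod_eq_nat1E[OF assms(3)] by auto
  then show ?thesis using assms(1) by (cases s) auto
qed

lemma sum_rotate_mod:
  fixes f :: "nat \<Rightarrow> 'b::comm_monoid_add"
  assumes "n > 0"
  shows "(\<Sum>k<n. f ((k + j) mod n)) = (\<Sum>k<n. f k)"
proof -
  have inj: "inj_on (\<lambda>k. (k + j) mod n) {..<n}"
    by (rule inj_onI) (use add_mod_right_cancel_less in auto)
  have "(\<lambda>k. (k + j) mod n) ` {..<n} = {..<n}"
    using inj by (intro endo_inj_surj) (auto simp: assms)
  then show ?thesis using sum.reindex[OF inj, of f] by simp
qed

lemma inj_on_cyclic_window:
  assumes "distinct xs" "b \<le> length xs"
  shows "inj_on (\<lambda>j. xs ! ((k + j) mod length xs)) {..<b}"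
proof (rule inj_onI)
  fix x y assume x: "x \<in> {..<b}" and y: "y \<in> {..<b}"
    and eq: "xs ! ((k + x) mod length xs) = xs ! ((k + y) mod length xs)"
  have "length xs > 0" using x assms(2) by auto
  then have "(x + k) mod length xs = (y + k) mod length xs"
    using eq assms(1) by (simp add: nth_eq_iff_index_eq add.commute)
  then show "x = y" using x y assms(2) add_mod_right_cancel_less[of x "length xs" y k] by simp
qed

lemma card_cyclic_window:
  assumes "distinct xs" "b \<le> length xs"
  shows "card (cyclic_window xs b k) = b"
  unfolding cyclic_window_def using card_image[OF inj_on_cyclic_window[OF assms]] by simp

lemma sum_sum_cyclic_window:
  fixes g :: "'a \<Rightarrow> real"
  assumes "distinct xs" "b \<le> length xs" "length xs > 0"
  shows "(\<Sum>k<length xs. \<Sum>y\<in>cyclic_window xs b k. g y) = b * (\<Sum>y\<in>set xs. g y)"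
proof -
  have "(\<Sum>k<length xs. \<Sum>y\<in>cyclic_window xs b k. g y)
      = (\<Sum>k<length xs. \<Sum>j<b. g (xs ! ((k + j) mod length xs)))"
    unfolding cyclic_window_def by (simp add: sum.reindex[OF inj_on_cyclic_window[OF assms(1,2)]])
  also have "\<dots> = (\<Sum>j<b. \<Sum>k<length xs. g (xs ! ((k + j) mod length xs)))"
    by (rule sum.swap)
  also have "\<dots> = b * (\<Sum>k<length xs. g (xs ! k))"
    using sum_rotate_mod[OF assms(3), of "\<lambda>i. g (xs ! i)"] by simp
  also have "\<dots> = b * (\<Sum>y\<in>set xs. g y)"
  proof -
    have "inj_on (nth xs) {..<length xs}" using assms(1) by (simp add: inj_on_nth)
    moreover have "nth xs ` {..<length xs} = set xs" by (auto simp: set_conv_nth)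
    ultimately show ?thesis using sum.reindex[of "nth xs" "{..<length xs}" g] by simp
  qed
  finally show ?thesis .
qed

lemma sum_cyclic_window_indicator:
  assumes "distinct xs" "b \<le> length xs" "length xs > 0" "g ` T \<subseteq> set xs"
  shows "(\<Sum>k<length xs. \<Sum>e\<in>T. if g e \<in> cyclic_window xs b k then 1 else 0 :: real)
       = b * card T"
proof -
  have "(\<Sum>k<length xs. if x \<in> cyclic_window xs b k then 1 else 0 :: real) = b"
    if "x \<in> set xs" for x
  proof -
    have "finite (cyclic_window xs b k)" for k unfolding cyclic_window_def by simp
    then have "(\<Sum>k<length xs. if x \<in> cyclic_window xs b k then 1 else 0 :: real)
             = (\<Sum>k<length xs. \<Sum>y\<in>cyclic_window xs b k. if y = x then 1 else 0)"
      by (simp add: sum.delta')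
    also have "\<dots> = b"
      using sum_sum_cyclic_window[OF assms(1-3), of "\<lambda>y. if y = x then 1 else 0"] that
      by (simp add: sum.delta')
    finally show ?thesis .
  qed
  then show ?thesis using assms(4) by (subst sum.swap) (simp add: image_subset_iff)
qed

lemma cyclic_in_actions:
  assumes "distinct xs" "b \<le> length xs" "length xs > 0" "set xs \<subseteq> X"
  shows "mixed {S. S \<subseteq> X \<and> card S \<le> b} (cyclic xs b)"
  unfolding mixed_def set_pmf_cyclic[OF assms(3)]
  using cyclic_window_subset[OF assms(3)] card_cyclic_window[OF assms(1,2)] assms(4) by fastforce

lemma basis_cyclic_subset:
  assumes "length xs > 0"
  shows "basis (cyclic xs b) \<subseteq> set xs"
proof
  fix x assume x: "x \<in> basis (cyclic xs b)"
  show "x \<in> set xs"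
  proof (rule ccontr)
    assume "x \<notin> set xs"
    then have "{S. x \<in> S} \<inter> set_pmf (cyclic xs b) = {}"
      using cyclic_window_subset[OF assms] unfolding set_pmf_cyclic[OF assms] by auto
    then have "measure_pmf.prob (cyclic xs b) {S. x \<in> S} = 0"
      using measure_Int_set_pmf[of "cyclic xs b" "{S. x \<in> S}"] by simp
    then show False using x unfolding basis_def by simp
  qed
qed

lemma exists_subset_card_sum_le_average:
  fixes q :: "'a \<Rightarrow> real"
  assumes "finite I" "b \<le> card I"
  shows "\<exists>J\<subseteq>I. card J = b \<and> (\<Sum>y\<in>J. q y) \<le> real b / real (card I) * (\<Sum>y\<in>I. q y)"
proof (cases "card I = 0")
  case True
  then show ?thesis using assms by auto
next
  case False
  obtain xs where xs: "set xs = I" "distinct xs" using finite_distinct_list[OF assms(1)] by blast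
  define n where "n = length xs"
  have n: "n = card I" "n > 0" "b \<le> n"
    using xs distinct_card False assms(2) unfolding n_def by fastforce+
  have "\<exists>k<n. (\<Sum>y\<in>cyclic_window xs b k. q y) \<le> b * (\<Sum>y\<in>I. q y) / n"
  proof (rule ccontr)
    assume "\<not> ?thesis"
    then have "(\<Sum>k<n. b * (\<Sum>y\<in>I. q y) / n) < (\<Sum>k<n. \<Sum>y\<in>cyclic_window xs b k. q y)"
      using n by (intro sum_strict_mono) auto
    moreover have "(\<Sum>k<n. \<Sum>y\<in>cyclic_window xs b k. q y) = b * (\<Sum>y\<in>I. q y)"
      using sum_sum_cyclic_window[OF xs(2), of b q] n xs(1) unfolding n_def by simp
    ultimately show False using n by simp
  qed
  then obtain k where k: "(\<Sum>y\<in>cyclic_window xs b k. q y) \<le> b * (\<Sum>y\<in>I. q y) / n" by blast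
  have "cyclic_window xs b k \<subseteq> I" "card (cyclic_window xs b k) = b"
    using cyclic_window_subset[of xs b k] card_cyclic_window[OF xs(2), of b k] n xs(1)
    unfolding n_def by auto
  then show ?thesis using k n by (intro exI[of _ "cyclic_window xs b k"]) auto
qed

subsection \<open>Covers and packings\<close>

lemma CS_subset: "model V E C \<Longrightarrow> S \<subseteq> V \<Longrightarrow> CS C S \<subseteq> E"
  unfolding model_def CS_def by auto

lemma finite_A1: "finite V \<Longrightarrow> finite (A1 V b)"
  unfolding A1_def by (rule finite_subset[of _ "Pow V"]) auto

lemma finite_A2: "finite E \<Longrightarrow> finite (A2 E b)"
  unfolding A2_def by (rule finite_subset[of _ "Pow E"]) auto

lemma set_packing_inj_on_monitor:
  assumes "model V E C" "set_packing V E C T" "\<And>e. e \<in> T \<Longrightarrow> f e \<in> V \<and> e \<in> C (f e)"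
  shows "inj_on f T"
proof (rule inj_onI)
  fix x y assume x: "x \<in> T" and y: "y \<in> T" and eq: "f x = f y"
  have "finite T" using assms(1,2) finite_subset by (auto simp: model_def set_packing_def)
  then have "finite (C (f x) \<inter> T)" by simp
  moreover have "card (C (f x) \<inter> T) \<le> 1" using assms(2,3) x by (simp add: set_packing_def)
  moreover have "x \<in> C (f x) \<inter> T" using assms(3) x by blast
  moreover have "y \<in> C (f x) \<inter> T" using assms(3)[OF y] y eq by simp
  ultimately show "x = y" using card_le_Suc0_iff_eq by (metis One_nat_def)
qed

lemma card_packing_le_card_cover:
  assumes m: "model V E C" and sc: "set_cover V E C S" and sp: "set_packing V E C T"
  shows "card T \<le> card S"
proof -
  have "\<forall>e\<in>T. \<exists>i\<in>S. e \<in> C i"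
    using sc sp by (auto simp: set_cover_def set_packing_def CS_def)
  then obtain f where f: "\<forall>e\<in>T. f e \<in> S \<and> e \<in> C (f e)" by metis
  have "inj_on f T"
    using f sc by (intro set_packing_inj_on_monitor[OF m sp]) (auto simp: set_cover_def)
  moreover have "finite S" using sc m finite_subset unfolding set_cover_def model_def by blast
  ultimately show ?thesis using f by (intro card_inj_on_le) auto
qed

lemma n_star_le_card_cover:
  assumes "model V E C" "set_cover V E C S"
  shows "n_star V E C \<le> card S"
proof -
  have "finite V" using assms(1) by (simp add: model_def)
  then have "finite {S. set_cover V E C S}"
    by (rule finite_subset[rotated, OF finite_Pow_iff[THEN iffD2]]) (auto simp: set_cover_def)
  then show ?thesis unfolding n_star_def using assms(2) by (intro Min_le) auto
qed

lemma m_star_le_card_cover: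
  assumes "model V E C" "set_cover V E C S"
  shows "m_star V E C \<le> card S"
proof -
  have "finite E" using assms(1) by (simp add: model_def)
  then have "finite {T. set_packing V E C T}"
    by (rule finite_subset[rotated, OF finite_Pow_iff[THEN iffD2]]) (auto simp: set_packing_def)
  moreover have "set_packing V E C {}" by (simp add: set_packing_def)
  ultimately show ?thesis unfolding m_star_def
    using card_packing_le_card_cover[OF assms] by (subst Max_le_iff) auto
qed

lemma minimal_set_cover_private_component:
  assumes m: "model V E C" and ms: "minimal_set_cover V E C S" and i: "i \<in> S"
  shows "\<exists>e\<in>C i. \<forall>j\<in>S. j \<noteq> i \<longrightarrow> e \<notin> C j"
proof -
  have sc: "S \<subseteq> V" "CS C S = E" using ms by (auto simp: minimal_set_cover_def set_cover_def)
  have "S - {i} \<subset> S" using i by auto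
  then have "\<not> set_cover V E C (S - {i})" using ms by (simp add: minimal_set_cover_def)
  then have "CS C (S - {i}) \<noteq> E" using sc by (auto simp: set_cover_def)
  moreover have "CS C (S - {i}) \<subseteq> E" using CS_subset[OF m, of "S - {i}"] sc by auto
  ultimately obtain e where "e \<in> E" "e \<notin> CS C (S - {i})" by auto
  then show ?thesis using sc(2) unfolding CS_def by auto
qed

lemma card_packing_Int_CS_le:
  assumes "model V E C" "set_packing V E C T" "S \<in> A1 V b"
  shows "card (T \<inter> CS C S) \<le> b"
proof -
  have SV: "S \<subseteq> V" and cS: "card S \<le> b" using assms(3) by (auto simp: A1_def)
  have "finite S" using SV assms(1) finite_subset unfolding model_def by blast
  then have "card (T \<inter> CS C S) \<le> (\<Sum>i\<in>S. card (T \<inter> C i))"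
    unfolding CS_def Int_UN_distrib by (rule card_UN_le)
  also have "\<dots> \<le> (\<Sum>i\<in>S. 1)"
    using assms(2) SV by (intro sum_mono) (auto simp: set_packing_def Int_commute)
  finally show ?thesis using cS by simp
qed

subsection \<open>Part (i): strategies supported on a minimal cover\<close>

lemma inj_on_private_components:
  assumes "\<And>i. i \<in> S' \<Longrightarrow> pe i \<in> C i \<and> (\<forall>j\<in>S'. j \<noteq> i \<longrightarrow> pe i \<notin> C j)"
  shows "inj_on pe S'"
proof (rule inj_onI)
  fix i j assume ij: "i \<in> S'" "j \<in> S'" "pe i = pe j"
  show "i = j"
  proof (rule ccontr)
    assume "i \<noteq> j"
    then have "pe j \<notin> C i" using assms[of j] ij(1,2) by blast
    moreover have "pe i \<in> C i" using assms[of i] ij(1) by blast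
    ultimately show False using ij(3) by simp
  qed
qed

lemma expectation_FF_private_components:
  fixes \<sigma> :: "'v set pmf"
  assumes fin: "finite (set_pmf \<sigma>)" and supp: "\<And>S. S \<in> set_pmf \<sigma> \<Longrightarrow> S \<subseteq> S'"
    and own: "\<And>i. i \<in> S' \<Longrightarrow> pe i \<in> C i \<and> (\<forall>j\<in>S'. j \<noteq> i \<longrightarrow> pe i \<notin> C j)"
    and J: "J \<subseteq> S'" "finite J"
  shows "measure_pmf.expectation \<sigma> (\<lambda>S. real (FF C S (pe ` J)))
       = (\<Sum>i\<in>J. measure_pmf.expectation \<sigma> (\<lambda>S. if i \<in> S then 1 else 0))"
proof -
  have inj: "inj_on pe J" using inj_on_private_components[OF own] J(1) by (rule inj_on_subset)
  have detect: "pe i \<in> CS C S \<longleftrightarrow> i \<in> S" if "i \<in> J" "S \<in> set_pmf \<sigma>" for i S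
  proof -
    have "i \<in> S'" "S \<subseteq> S'" using that J(1) supp by auto
    then show ?thesis using own[of i] unfolding CS_def by auto
  qed
  have "measure_pmf.expectation \<sigma> (\<lambda>S. real (FF C S (pe ` J)))
      = (\<Sum>e\<in>pe ` J. measure_pmf.expectation \<sigma> (\<lambda>S. if e \<in> CS C S then 1 else 0))"
    unfolding FF_def Int_commute[of "CS C _"] using J(2) by (intro expectation_card_Int fin) simp
  also have "\<dots> = (\<Sum>i\<in>J. measure_pmf.expectation \<sigma> (\<lambda>S. if pe i \<in> CS C S then 1 else 0))"
    by (simp add: sum.reindex[OF inj])
  also have "\<dots> = (\<Sum>i\<in>J. measure_pmf.expectation \<sigma> (\<lambda>S. if i \<in> S then 1 else 0))"
    using detect by (intro sum.cong refl expectation_cong_finite_support[OF fin]) simp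
  finally show ?thesis .
qed

lemma exists_attack_against_cover_strategy:
  assumes m: "model V E C" and ms: "minimal_set_cover V E C S'" and b2: "b2 \<le> card S'"
    and mix: "mixed (A1 V b1) \<sigma>" and bas: "basis \<sigma> \<subseteq> S'"
  shows "\<exists>T\<in>A2 E b2. - U2 C \<sigma> (return_pmf T) \<le> real b2 * (real b1 / real (card S') - 1)"
proof -
  have S'V: "S' \<subseteq> V" using ms by (simp add: minimal_set_cover_def set_cover_def)
  have fV: "finite V" and CE: "\<forall>i\<in>V. C i \<subseteq> E" using m by (simp_all add: model_def)
  have fS': "finite S'" using S'V fV by (rule finite_subset)
  have fin: "finite (set_pmf \<sigma>)" using mix finite_A1[OF fV] unfolding mixed_def by (rule finite_subset)
  have supp: "S \<subseteq> S'" "card S \<le> b1" if "S \<in> set_pmf \<sigma>" for S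
    using that mix bas mem_basis_if_mem_set_pmf[OF that] by (auto simp: mixed_def A1_def)
  obtain pe where pe: "\<And>i. i \<in> S' \<Longrightarrow> pe i \<in> C i \<and> (\<forall>j\<in>S'. j \<noteq> i \<longrightarrow> pe i \<notin> C j)"
    using minimal_set_cover_private_component[OF m ms] by metis
  define q where "q i = measure_pmf.expectation \<sigma> (\<lambda>S. if i \<in> S then 1 else (0::real))" for i
  have "(\<Sum>i\<in>S'. q i) = measure_pmf.expectation \<sigma> (\<lambda>S. real (card (S' \<inter> S)))"
    unfolding q_def using expectation_card_Int[OF fin fS', of "\<lambda>S. S"] by simp
  also have "\<dots> \<le> b1"
    using supp by (intro expectation_le_const_finite_support[OF fin]) (simp add: Int_absorb1)
  finally have sum_q: "(\<Sum>i\<in>S'. q i) \<le> b1" .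
  obtain J where J: "J \<subseteq> S'" "card J = b2" "(\<Sum>i\<in>J. q i) \<le> real b2 / card S' * (\<Sum>i\<in>S'. q i)"
    using exists_subset_card_sum_le_average[OF fS' b2, of q] by blast
  have fJ: "finite J" using J(1) fS' finite_subset by blast
  have "inj_on pe J" using inj_on_private_components[OF pe] J(1) by (rule inj_on_subset)
  then have card_T: "card (pe ` J) = b2" using J(2) by (simp add: card_image)
  have "pe ` J \<subseteq> E" using J(1) S'V pe CE by blast
  then have T: "pe ` J \<in> A2 E b2" using card_T by (simp add: A2_def)
  have "measure_pmf.expectation \<sigma> (\<lambda>S. real (FF C S (pe ` J))) = (\<Sum>i\<in>J. q i)"
    unfolding q_def using supp pe J(1) fJ by (intro expectation_FF_private_components[OF fin]) auto
  also have "\<dots> \<le> real b2 / card S' * b1"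
    using J(3) mult_left_mono[OF sum_q, of "real b2 / card S'"] by simp
  finally have "- U2 C \<sigma> (return_pmf (pe ` J)) \<le> real b2 * (real b1 / real (card S') - 1)"
    unfolding neg_U2_return_pmf card_T by (simp add: algebra_simps)
  then show ?thesis using T by blast
qed

lemma neg_U2_cyclic_cover_ge:
  assumes m: "model V E C" and sc: "set_cover V E C S'"
    and xs: "distinct xs" "set xs = S'" and b1: "b1 \<le> card S'" and T: "T \<in> A2 E b2"
  shows "real b2 * (real b1 / real (card S') - 1) \<le> - U2 C (cyclic xs b1) (return_pmf T)"
proof -
  let ?n = "card S'"
  have len: "length xs = ?n" using xs distinct_card by metis
  have "S' \<noteq> {}" using sc m by (auto simp: set_cover_def CS_def model_def)
  then have n0: "?n > 0" using xs(2) by auto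
  have TE: "T \<subseteq> E" and card_T: "card T \<le> b2" using T by (auto simp: A2_def)
  have fT: "finite T" using TE m finite_subset by (auto simp: model_def)
  have "\<forall>e\<in>T. \<exists>i\<in>S'. e \<in> C i" using TE sc by (auto simp: set_cover_def CS_def)
  then obtain mon where mon: "\<And>e. e \<in> T \<Longrightarrow> mon e \<in> S' \<and> e \<in> C (mon e)" by metis
  have "(\<Sum>e\<in>T. if mon e \<in> cyclic_window xs b1 k then 1 else 0) \<le> real (FF C (cyclic_window xs b1 k) T)"
    for k
    unfolding FF_def Int_commute[of "CS C _"] real_card_Int_eq_sum_indicator[OF fT]
    using mon by (intro sum_mono) (auto simp: CS_def)
  then have "(\<Sum>k<?n. \<Sum>e\<in>T. if mon e \<in> cyclic_window xs b1 k then 1 else 0)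
           \<le> (\<Sum>k<?n. real (FF C (cyclic_window xs b1 k) T))"
    by (intro sum_mono)
  moreover have "(\<Sum>k<?n. \<Sum>e\<in>T. if mon e \<in> cyclic_window xs b1 k then 1 else 0 :: real)
               = b1 * card T"
    using sum_cyclic_window_indicator[OF xs(1), of b1 mon T] mon xs(2) len b1 n0 by auto
  ultimately have "real b1 * card T / ?n \<le> measure_pmf.expectation (cyclic xs b1) (\<lambda>S. real (FF C S T))"
    using expectation_cyclic[of xs b1] len n0 by (simp add: divide_right_mono)
  moreover have "real b2 * (real b1 / ?n - 1) \<le> real (card T) * (real b1 / ?n - 1)"
    using card_T b1 n0 by (intro mult_right_mono_neg) (auto simp: divide_le_eq)
  ultimately show ?thesis unfolding neg_U2_return_pmf by (simp add: algebra_simps)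
qed

subsection \<open>Part (ii): strategies supported on a packing\<close>

lemma exists_defence_against_packing_strategy:
  assumes m: "model V E C" and sp: "set_packing V E C T'" and b2: "b2 \<le> card T'" "b2 > 0"
    and mix: "mixed (A2 E b2) \<sigma>" and bas: "basis \<sigma> \<subseteq> T'"
  shows "\<exists>S\<in>A1 V b1. U2 C (return_pmf S) \<sigma> \<le> max 0 (real b2 * (1 - real b1 / real (card T')))"
proof -
  let ?m = "card T'"
  have T'E: "T' \<subseteq> E" using sp by (simp add: set_packing_def)
  have fE: "finite E" using m by (simp add: model_def)
  have fT': "finite T'" using T'E fE by (rule finite_subset)
  have fin: "finite (set_pmf \<sigma>)" using mix finite_A2[OF fE] unfolding mixed_def by (rule finite_subset)
  have supp: "T \<subseteq> T'" "card T \<le> b2" if "T \<in> set_pmf \<sigma>" for T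
    using that mix bas mem_basis_if_mem_set_pmf[OF that] by (auto simp: mixed_def A2_def)
  define p where "p e = measure_pmf.expectation \<sigma> (\<lambda>T. if e \<in> T then 1 else (0::real))" for e
  have expected_card: "measure_pmf.expectation \<sigma> (\<lambda>T. real (card (J \<inter> T))) = (\<Sum>e\<in>J. p e)"
    if "finite J" for J
    unfolding p_def using expectation_card_Int[OF fin that, of "\<lambda>T. T"] by simp
  have "measure_pmf.expectation \<sigma> (\<lambda>T. real (card T))
      = measure_pmf.expectation \<sigma> (\<lambda>T. real (card (T' \<inter> T)))"
    using supp by (intro expectation_cong_finite_support[OF fin]) (simp add: Int_absorb1)
  then have "measure_pmf.expectation \<sigma> (\<lambda>T. real (card T)) = (\<Sum>e\<in>T'. p e)"
    using expected_card[OF fT'] by simp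
  moreover have "measure_pmf.expectation \<sigma> (\<lambda>T. real (card T)) \<le> b2"
    using supp by (intro expectation_le_const_finite_support[OF fin]) simp
  ultimately have ET: "measure_pmf.expectation \<sigma> (\<lambda>T. real (card T)) = (\<Sum>e\<in>T'. p e)"
    "(\<Sum>e\<in>T'. p e) \<le> b2" by simp_all
  have "\<forall>e\<in>T'. \<exists>i\<in>V. e \<in> C i" using m T'E by (auto simp: model_def)
  then obtain mon where mon: "\<And>e. e \<in> T' \<Longrightarrow> mon e \<in> V \<and> e \<in> C (mon e)" by metis
  obtain J where J: "J \<subseteq> T'" "card J = min b1 ?m"
    "real (min b1 ?m) / ?m * (\<Sum>e\<in>T'. p e) \<le> (\<Sum>e\<in>J. p e)"
    using exists_subset_card_sum_le_average[OF fT', of "min b1 ?m" "\<lambda>e. - p e"]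
    by (auto simp: sum_negf)
  have fJ: "finite J" using J(1) fT' finite_subset by blast
  define S where "S = mon ` J"
  have S: "S \<in> A1 V b1"
    unfolding S_def A1_def using mon J card_image_le[OF fJ, of mon] by auto
  have "(\<Sum>e\<in>J. p e) \<le> measure_pmf.expectation \<sigma> (\<lambda>T. real (FF C S T))"
    unfolding expected_card[OF fJ, symmetric] FF_def
  proof (rule expectation_mono_finite_support[OF fin])
    fix T assume "T \<in> set_pmf \<sigma>"
    then have "finite T" using supp(1) fT' finite_subset by blast
    moreover have "J \<subseteq> CS C S" unfolding S_def CS_def using mon J(1) by blast
    ultimately show "real (card (J \<inter> T)) \<le> real (card (CS C S \<inter> T))"
      by (intro of_nat_mono card_mono) auto
  qed
  then have "U2 C (return_pmf S) \<sigma> \<le> (1 - real (min b1 ?m) / ?m) * (\<Sum>e\<in>T'. p e)"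
    unfolding U2_return_pmf ET(1) using J(3) by (simp add: left_diff_distrib)
  also have "\<dots> \<le> (1 - real (min b1 ?m) / ?m) * b2"
    using ET(2) b2 by (intro mult_left_mono) (simp_all add: divide_le_eq_1)
  also have "\<dots> \<le> max 0 (real b2 * (1 - real b1 / ?m))"
    by (cases "b1 \<le> ?m") (simp_all add: min_def mult.commute)
  finally show ?thesis using S by blast
qed

lemma U2_cyclic_packing_ge:
  assumes m: "model V E C" and sp: "set_packing V E C T'"
    and es: "distinct es" "set es = T'" and b2: "b2 \<le> card T'" "b2 > 0" and S: "S \<in> A1 V b1"
  shows "max 0 (real b2 * (1 - real b1 / real (card T'))) \<le> U2 C (return_pmf S) (cyclic es b2)"
proof -
  let ?m = "card T'"
  have len: "length es = ?m" using es distinct_card by metis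
  have m0: "?m > 0" using b2 by auto
  have fT': "finite T'" using es(2) by auto
  define D where "D = T' - CS C S"
  have window: "cyclic_window es b2 k \<subseteq> T'" for k
    using cyclic_window_subset[of es b2 k] len m0 es(2) by auto
  have undetected: "real (card (cyclic_window es b2 k)) - real (FF C S (cyclic_window es b2 k))
      = (\<Sum>e\<in>D. if e \<in> cyclic_window es b2 k then 1 else 0)" for k
  proof -
    have split: "cyclic_window es b2 k = (CS C S \<inter> cyclic_window es b2 k) \<union> (D \<inter> cyclic_window es b2 k)"
      using window[of k] D_def by auto
    have "finite (cyclic_window es b2 k)" by (simp add: cyclic_window_def)
    then have "card (cyclic_window es b2 k)
        = card (CS C S \<inter> cyclic_window es b2 k) + card (D \<inter> cyclic_window es b2 k)"
      by (subst split, intro card_Un_disjoint) (auto simp: D_def)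
    then show ?thesis
      unfolding FF_def using real_card_Int_eq_sum_indicator[of D] fT' D_def by simp
  qed
  have "U2 C (return_pmf S) (cyclic es b2)
     = (\<Sum>k<?m. real (card (cyclic_window es b2 k)) - real (FF C S (cyclic_window es b2 k))) / ?m"
    unfolding U2_return_pmf using expectation_cyclic[of es b2] len m0
    by (simp add: sum_subtractf diff_divide_distrib)
  also have "\<dots> = real b2 * card D / ?m"
  proof -
    have "D \<subseteq> set es" using es(2) D_def by auto
    then show ?thesis
      unfolding undetected using sum_cyclic_window_indicator[OF es(1), of b2 "\<lambda>e. e" D] len b2 m0
      by simp
  qed
  finally have U: "U2 C (return_pmf S) (cyclic es b2) = real b2 * card D / ?m" .
  have "card D = ?m - card (T' \<inter> CS C S)"
    unfolding D_def using fT' by (simp add: card_Diff_subset_Int)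
  moreover have "card (T' \<inter> CS C S) \<le> ?m" using fT' by (simp add: card_mono)
  ultimately have "real ?m - b1 \<le> card D" using card_packing_Int_CS_le[OF m sp S] by simp
  then have "real b2 * (real ?m - b1) / ?m \<le> real b2 * card D / ?m"
    by (intro divide_right_mono mult_left_mono) auto
  moreover have "real b2 * (1 - real b1 / ?m) = real b2 * (real ?m - b1) / ?m"
    using m0 by (simp add: field_simps)
  ultimately have "real b2 * (1 - real b1 / ?m) \<le> U2 C (return_pmf S) (cyclic es b2)"
    unfolding U by linarith
  moreover have "0 \<le> U2 C (return_pmf S) (cyclic es b2)" unfolding U by simp
  ultimately show ?thesis by simp
qed

lemma minimal_cover_strategy_value:
  assumes m: "model V E C" and ms: "minimal_set_cover V E C S'"
    and n_star: "b1 < n_star V E C" and m_star: "b2 < m_star V E C"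
  shows "(\<forall>\<sigma>1. mixed (A1 V b1) \<sigma>1 \<and> basis \<sigma>1 \<subseteq> S' \<longrightarrow>
            Min ((\<lambda>T. - U2 C \<sigma>1 (return_pmf T)) ` A2 E b2)
              \<le> real b2 * (real b1 / real (card S') - 1))
       \<and> (\<forall>xs. distinct xs \<and> set xs = S' \<longrightarrow>
            mixed (A1 V b1) (cyclic xs b1) \<and> basis (cyclic xs b1) \<subseteq> S' \<and>
            Min ((\<lambda>T. - U2 C (cyclic xs b1) (return_pmf T)) ` A2 E b2)
              = real b2 * (real b1 / real (card S') - 1))"
proof -
  have sc: "set_cover V E C S'" using ms by (simp add: minimal_set_cover_def)
  have b1: "b1 < card S'" using n_star_le_card_cover[OF m sc] n_star by simp
  have b2: "b2 \<le> card S'" using m_star_le_card_cover[OF m sc] m_star by simp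
  have A2: "finite (A2 E b2)" "A2 E b2 \<noteq> {}"
    using m finite_A2[of E b2] by (auto simp: model_def A2_def)
  have upper: "Min ((\<lambda>T. - U2 C \<sigma> (return_pmf T)) ` A2 E b2)
      \<le> real b2 * (real b1 / real (card S') - 1)"
    if "mixed (A1 V b1) \<sigma>" "basis \<sigma> \<subseteq> S'" for \<sigma>
    using exists_attack_against_cover_strategy[OF m ms b2 that] A2 by (auto simp: Min_le_iff)
  have "mixed (A1 V b1) (cyclic xs b1) \<and> basis (cyclic xs b1) \<subseteq> S' \<and>
      Min ((\<lambda>T. - U2 C (cyclic xs b1) (return_pmf T)) ` A2 E b2)
        = real b2 * (real b1 / real (card S') - 1)"
    if xs: "distinct xs" "set xs = S'" for xs
  proof (intro conjI)
    have len: "length xs = card S'" using xs distinct_card by metis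
    show mix: "mixed (A1 V b1) (cyclic xs b1)"
      unfolding A1_def using cyclic_in_actions[OF xs(1)] xs(2) len b1 sc
      by (simp add: set_cover_def)
    show bas: "basis (cyclic xs b1) \<subseteq> S'" using basis_cyclic_subset[of xs b1] xs(2) len b1 by simp
    show "Min ((\<lambda>T. - U2 C (cyclic xs b1) (return_pmf T)) ` A2 E b2)
        = real b2 * (real b1 / real (card S') - 1)"
      using upper[OF mix bas] neg_U2_cyclic_cover_ge[OF m sc xs less_imp_le[OF b1]] A2
      by (intro antisym) (simp_all add: Min_ge_iff)
  qed
  then show ?thesis using upper by blast
qed

lemma packing_strategy_value:
  assumes m: "model V E C" and sp: "set_packing V E C T'"
    and b2: "b2 \<le> card T'" "b2 > 0"
  shows "(\<forall>\<sigma>2. mixed (A2 E b2) \<sigma>2 \<and> basis \<sigma>2 \<subseteq> T' \<longrightarrow>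
            Min ((\<lambda>S. U2 C (return_pmf S) \<sigma>2) ` A1 V b1)
              \<le> max 0 (real b2 * (1 - real b1 / real (card T'))))
       \<and> (\<forall>es. distinct es \<and> set es = T' \<longrightarrow>
            mixed (A2 E b2) (cyclic es b2) \<and> basis (cyclic es b2) \<subseteq> T' \<and>
            Min ((\<lambda>S. U2 C (return_pmf S) (cyclic es b2)) ` A1 V b1)
              = max 0 (real b2 * (1 - real b1 / real (card T'))))"
proof -
  have A1: "finite (A1 V b1)" "A1 V b1 \<noteq> {}"
    using m finite_A1[of V b1] by (auto simp: model_def A1_def)
  have upper: "Min ((\<lambda>S. U2 C (return_pmf S) \<sigma>) ` A1 V b1)
      \<le> max 0 (real b2 * (1 - real b1 / real (card T')))"
    if "mixed (A2 E b2) \<sigma>" "basis \<sigma> \<subseteq> T'" for \<sigma>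
    using exists_defence_against_packing_strategy[OF m sp b2 that] A1 by (auto simp: Min_le_iff)
  have "mixed (A2 E b2) (cyclic es b2) \<and> basis (cyclic es b2) \<subseteq> T' \<and>
      Min ((\<lambda>S. U2 C (return_pmf S) (cyclic es b2)) ` A1 V b1)
        = max 0 (real b2 * (1 - real b1 / real (card T')))"
    if es: "distinct es" "set es = T'" for es
  proof (intro conjI)
    have len: "length es = card T'" using es distinct_card by metis
    show mix: "mixed (A2 E b2) (cyclic es b2)"
      unfolding A2_def using cyclic_in_actions[OF es(1)] es(2) len b2 sp
      by (simp add: set_packing_def)
    show bas: "basis (cyclic es b2) \<subseteq> T'" using basis_cyclic_subset[of es b2] es(2) len b2 by simp
    show "Min ((\<lambda>S. U2 C (return_pmf S) (cyclic es b2)) ` A1 V b1)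
        = max 0 (real b2 * (1 - real b1 / real (card T')))"
      using upper[OF mix bas] U2_cyclic_packing_ge[OF m sp es b2] A1
      by (intro antisym) (simp_all add: Min_ge_iff)
  qed
  then show ?thesis using upper by blast
qed

theorem proposition1:
  fixes V :: "'v set" and E :: "'e set" and C :: "'v \<Rightarrow> 'e set" and b1 b2 :: nat
  assumes "model V E C" and "b1 > 0" and "b2 > 0"
    and "b1 < n_star V E C" and "b2 < m_star V E C"
  shows
   "(\<forall>S'. minimal_set_cover V E C S' \<longrightarrow>
      (\<forall>\<sigma>1. mixed (A1 V b1) \<sigma>1 \<and> basis \<sigma>1 \<subseteq> S' \<longrightarrow>
          Min ((\<lambda>T. - U2 C \<sigma>1 (return_pmf T)) ` A2 E b2)
            \<le> real b2 * (real b1 / real (card S') - 1))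
    \<and> (\<forall>xs. distinct xs \<and> set xs = S' \<longrightarrow>
          mixed (A1 V b1) (cyclic xs b1) \<and> basis (cyclic xs b1) \<subseteq> S' \<and>
          Min ((\<lambda>T. - U2 C (cyclic xs b1) (return_pmf T)) ` A2 E b2)
            = real b2 * (real b1 / real (card S') - 1)))
  \<and> (\<forall>T'. set_packing V E C T' \<and> card T' \<ge> b2 \<longrightarrow>
      (\<forall>\<sigma>2. mixed (A2 E b2) \<sigma>2 \<and> basis \<sigma>2 \<subseteq> T' \<longrightarrow>
          Min ((\<lambda>S. U2 C (return_pmf S) \<sigma>2) ` A1 V b1)
            \<le> max 0 (real b2 * (1 - real b1 / real (card T'))))
    \<and> (\<forall>es. distinct es \<and> set es = T' \<longrightarrow>
          mixed (A2 E b2) (cyclic es b2) \<and> basis (cyclic es b2) \<subseteq> T' \<and>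
          Min ((\<lambda>S. U2 C (return_pmf S) (cyclic es b2)) ` A1 V b1)
            = max 0 (real b2 * (1 - real b1 / real (card T')))))"
  by (rule conjI; intro allI impI; (elim conjE)?;
      rule minimal_cover_strategy_value[OF assms(1) _ assms(4,5)]
        packing_strategy_value[OF assms(1) _ _ assms(3)]; assumption)

end
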